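(* Let $M$ be an entrywise nonnegative $m\times n$ real matrix and let $M=AW$ be a stable nonnegative matrix factorization with $A\in\mathbb{R}_{\ge0}^{m\times r}$, $W\in\mathbb{R}_{\ge0}^{r\times n}$. Let $s=\mathrm{rank}(A)$, let $U\subseteq[m]$ be a set of $s$ linearly independent rows of $A$, and let $B_1,\dots,B_p$ be the ensemble of $A$ at $U$. Then for every $k\in[p]$ and every column index $i$, $AB_kM_i^U=M_i$.
   Context: Notation: $M_i$ is the $i$-th column, $M^j$ the $j$-th row; $A_S$ denotes columns in $S$, $A^U$ rows in $U$, $M_i^U$ the entries of $M_i$ in rows $U$. $\mathrm{aff}(A)=\{\sum_i\alpha_iA_i:\alpha_i\ge0\}$. A subset $S\subseteq[r]$ of columns of $A$ is admissible for $v\in\mathbb{R}^m$ if $v\in\mathrm{aff}(A_S)$; a subset $T\subseteq[r]$ of rows of $W$ is admissible for a row vector $u$ if $u$ is a nonnegative combination of the rows of $W^T$. Lexicographic ordering on subsets of $[r]$: if $|S|<|T|$ then $S$ precedes $T$; equal-size subsets compared by standard lexicographic order. $M=AW$ is stable if, with $S_i$ the lexicographically first subset of columns of $A$ admissible for $M_i$ and $T_j$ the lexicographically first subset of rows of $W$ admissible for $M^j$, each $W_i$ is supported in $S_i$ and each row $A^j$ is supported in $T_j$. Ensemble: let $S_1,\dots,S_p$ be all sets of $s$ linearly independent columns of $A$, in lexicographic order; $B_k$ is the $r\times s$ matrix that is zero on rows outside $S_k$ and whose restriction to rows $S_k$ equals $(A^U_{S_k})^{-1}$. *)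

theory Defs
  imports Complex_Main
begin

text \<open>Matrices are functions nat \<Rightarrow> nat \<Rightarrow> real; an m x r matrix A has entries A l j
  for l < m, j < r (0-based indices, [r] = {0..<r}).\<close>

type_synonym rmat = "nat \<Rightarrow> nat \<Rightarrow> real"

definition nonneg_mat :: "rmat \<Rightarrow> nat \<Rightarrow> nat \<Rightarrow> bool" where
  "nonneg_mat A m r \<longleftrightarrow> (\<forall>l<m. \<forall>j<r. A l j \<ge> 0)"

definition mat_mult :: "rmat \<Rightarrow> nat \<Rightarrow> rmat \<Rightarrow> rmat" where
  "mat_mult A r W = (\<lambda>l i. \<Sum>j<r. A l j * W j i)"

definition cols_indep :: "rmat \<Rightarrow> nat \<Rightarrow> nat set \<Rightarrow> bool" where
  "cols_indep A m S \<longleftrightarrow>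
     (\<forall>c. (\<forall>l<m. (\<Sum>j\<in>S. c j * A l j) = 0) \<longrightarrow> (\<forall>j\<in>S. c j = 0))"

definition rows_indep :: "rmat \<Rightarrow> nat \<Rightarrow> nat set \<Rightarrow> bool" where
  "rows_indep A r U \<longleftrightarrow>
     (\<forall>c. (\<forall>j<r. (\<Sum>u\<in>U. c u * A u j) = 0) \<longrightarrow> (\<forall>u\<in>U. c u = 0))"

definition mat_rank :: "rmat \<Rightarrow> nat \<Rightarrow> nat \<Rightarrow> nat" where
  "mat_rank A m r = Max {card S | S. S \<subseteq> {..<r} \<and> cols_indep A m S}"

definition lex_less :: "nat set \<Rightarrow> nat set \<Rightarrow> bool" where
  "lex_less S T \<longleftrightarrow> card S < card T \<or>
     (card S = card T \<and>
      (sorted_list_of_set S, sorted_list_of_set T) \<in> lexord {(a, b). a < b})"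

definition lex_first :: "nat \<Rightarrow> (nat set \<Rightarrow> bool) \<Rightarrow> nat set \<Rightarrow> bool" where
  "lex_first r P S \<longleftrightarrow> S \<subseteq> {..<r} \<and> P S \<and>
     (\<forall>T. T \<subseteq> {..<r} \<and> P T \<longrightarrow> \<not> lex_less T S)"

text \<open>S admissible for column vector v: v \<in> aff(A_S) (nonnegative combinations).\<close>
definition col_admissible :: "rmat \<Rightarrow> nat \<Rightarrow> (nat \<Rightarrow> real) \<Rightarrow> nat set \<Rightarrow> bool" where
  "col_admissible A m v S \<longleftrightarrow>
     (\<exists>\<alpha>. (\<forall>j\<in>S. \<alpha> j \<ge> 0) \<and> (\<forall>l<m. v l = (\<Sum>j\<in>S. \<alpha> j * A l j)))"

definition row_admissible :: "rmat \<Rightarrow> nat \<Rightarrow> (nat \<Rightarrow> real) \<Rightarrow> nat set \<Rightarrow> bool" where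
  "row_admissible W n u T \<longleftrightarrow>
     (\<exists>\<beta>. (\<forall>j\<in>T. \<beta> j \<ge> 0) \<and> (\<forall>i<n. u i = (\<Sum>j\<in>T. \<beta> j * W j i)))"

definition stable_fact :: "rmat \<Rightarrow> rmat \<Rightarrow> rmat \<Rightarrow> nat \<Rightarrow> nat \<Rightarrow> nat \<Rightarrow> bool" where
  "stable_fact M A W m n r \<longleftrightarrow>
     (\<forall>i<n. \<forall>S. lex_first r (col_admissible A m (\<lambda>l. M l i)) S \<longrightarrow>
        (\<forall>j<r. j \<notin> S \<longrightarrow> W j i = 0)) \<and>
     (\<forall>l<m. \<forall>T. lex_first r (row_admissible W n (\<lambda>i. M l i)) T \<longrightarrow>
        (\<forall>j<r. j \<notin> T \<longrightarrow> A l j = 0))"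

definition sub_inverse :: "rmat \<Rightarrow> nat set \<Rightarrow> nat set \<Rightarrow> rmat" where
  "sub_inverse A U S = (THE C.
     (\<forall>u\<in>U. \<forall>u'\<in>U. (\<Sum>j\<in>S. A u j * C j u') = (if u = u' then 1 else 0)) \<and>
     (\<forall>j\<in>S. \<forall>j'\<in>S. (\<Sum>u\<in>U. C j u * A u j') = (if j = j' then 1 else 0)) \<and>
     (\<forall>j u. j \<notin> S \<or> u \<notin> U \<longrightarrow> C j u = 0))"

text \<open>Ensemble member B_k for S_k = S: the r x s matrix zero on rows outside S whose
  restriction to rows S is (A^U_S)^{-1}; its columns are indexed by U.\<close>
definition ensemble_B :: "rmat \<Rightarrow> nat set \<Rightarrow> nat set \<Rightarrow> rmat" where
  "ensemble_B A U S = sub_inverse A U S"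

definition ensemble_sets :: "rmat \<Rightarrow> nat \<Rightarrow> nat \<Rightarrow> nat \<Rightarrow> nat set set" where
  "ensemble_sets A m r s = {S. S \<subseteq> {..<r} \<and> card S = s \<and> cols_indep A m S}"

end

theory Submission
  imports Defs "HOL-Library.Function_Algebras"
begin

text \<open>Since \<open>S\<close> is a maximal independent set of columns, every column of \<open>A\<close>, hence every
  column \<open>M\<^sub>i = A W\<^sub>i\<close>, is a combination \<open>A\<^sub>S y\<close>. Row rank is at most column rank
  (Steinitz exchange), so the \<open>rank A\<close> independent rows \<open>U\<close> span all rows of \<open>A\<close>; hence the
  square matrix \<open>A\<^sup>U\<^sub>S\<close> has independent columns and is invertible, and
  \<open>B\<^sub>k M\<^sub>i\<^sup>U = (A\<^sup>U\<^sub>S)\<^sup>-\<^sup>1 A\<^sup>U\<^sub>S y = y\<close>, giving \<open>A B\<^sub>k M\<^sub>i\<^sup>U = A\<^sub>S y = M\<^sub>i\<close>.\<close>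

definition lin_indep :: "'x set \<Rightarrow> 'i set \<Rightarrow> ('i \<Rightarrow> 'x \<Rightarrow> real) \<Rightarrow> bool" where
  "lin_indep X I v \<longleftrightarrow> (\<forall>c. (\<forall>x\<in>X. (\<Sum>i\<in>I. c i * v i x) = 0) \<longrightarrow> (\<forall>i\<in>I. c i = 0))"

definition in_lin_span :: "'x set \<Rightarrow> 'i set \<Rightarrow> ('i \<Rightarrow> 'x \<Rightarrow> real) \<Rightarrow> ('x \<Rightarrow> real) \<Rightarrow> bool" where
  "in_lin_span X I v w \<longleftrightarrow> (\<exists>\<beta>. \<forall>x\<in>X. w x = (\<Sum>i\<in>I. \<beta> i * v i x))"

lemma lin_indepD:
  assumes "lin_indep X I v" "\<And>x. x \<in> X \<Longrightarrow> (\<Sum>i\<in>I. c i * v i x) = 0" "i \<in> I"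
  shows "c i = 0"
  using assms unfolding lin_indep_def by blast

lemma lin_indep_cong:
  assumes "\<And>i x. i \<in> I \<Longrightarrow> x \<in> X \<Longrightarrow> v i x = v' i x"
  shows "lin_indep X I v \<longleftrightarrow> lin_indep X I v'"
proof -
  have "(\<Sum>i\<in>I. c i * v i x) = (\<Sum>i\<in>I. c i * v' i x)" if "x \<in> X" for c x
    using assms that by (intro sum.cong) auto
  then show ?thesis
    unfolding lin_indep_def by simp
qed

lemma in_lin_span_cong:
  assumes "\<And>i x. i \<in> I \<Longrightarrow> x \<in> X \<Longrightarrow> v i x = v' i x"
  shows "in_lin_span X I v w \<longleftrightarrow> in_lin_span X I v' w"
proof -
  have "(\<Sum>i\<in>I. c i * v i x) = (\<Sum>i\<in>I. c i * v' i x)" if "x \<in> X" for c x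
    using assms that by (intro sum.cong) auto
  then show ?thesis
    unfolding in_lin_span_def by simp
qed

lemma in_lin_span_member:
  assumes "finite I" "i \<in> I"
  shows "in_lin_span X I v (v i)"
  unfolding in_lin_span_def
  by (rule exI[of _ "\<lambda>k. of_bool (k = i)"]) (simp add: assms)

lemma in_lin_span_unit_vectors:
  assumes "finite X"
  shows "in_lin_span X X (\<lambda>y x. of_bool (x = y)) w"
  unfolding in_lin_span_def
  by (rule exI[of _ w]) (simp add: assms)

lemma in_lin_span_sum:
  assumes "finite J" and span: "\<And>j. j \<in> J \<Longrightarrow> in_lin_span X I v (w j)"
  shows "in_lin_span X I v (\<lambda>x. \<Sum>j\<in>J. c j * w j x)"
proof -
  obtain \<beta> where \<beta>: "\<And>j x. j \<in> J \<Longrightarrow> x \<in> X \<Longrightarrow> w j x = (\<Sum>i\<in>I. \<beta> j i * v i x)"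
    using span unfolding in_lin_span_def by metis
  have "(\<Sum>j\<in>J. c j * w j x) = (\<Sum>i\<in>I. (\<Sum>j\<in>J. c j * \<beta> j i) * v i x)" if "x \<in> X" for x
    using that by (simp add: \<beta> sum_distrib_left sum_distrib_right sum.swap[of _ J] mult.assoc)
  then show ?thesis
    unfolding in_lin_span_def by (intro exI[of _ "\<lambda>i. \<Sum>j\<in>J. c j * \<beta> j i"]) simp
qed

lemma lin_indep_insert:
  assumes "i \<notin> I" "finite I" "lin_indep X I v" "\<not> in_lin_span X I v (v i)"
  shows "lin_indep X (insert i I) v"
  unfolding lin_indep_def
proof (intro allI impI)
  fix c assume zero: "\<forall>x\<in>X. (\<Sum>k\<in>insert i I. c k * v k x) = 0"
  then have split: "c i * v i x + (\<Sum>k\<in>I. c k * v k x) = 0" if "x \<in> X" for x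
    using that assms(1,2) by simp
  have "c i = 0"
  proof (rule ccontr)
    assume "c i \<noteq> 0"
    have "v i x = (\<Sum>k\<in>I. (- c k / c i) * v k x)" if "x \<in> X" for x
    proof -
      have "c i * v i x = - (\<Sum>k\<in>I. c k * v k x)"
        using split[OF that] by linarith
      then have "v i x = - (\<Sum>k\<in>I. c k * v k x) / c i"
        using \<open>c i \<noteq> 0\<close> by (simp add: field_simps)
      also have "\<dots> = (\<Sum>k\<in>I. (- c k / c i) * v k x)"
        by (simp add: sum_divide_distrib sum_negf)
      finally show ?thesis .
    qed
    then have "in_lin_span X I v (v i)"
      unfolding in_lin_span_def by (intro exI[of _ "\<lambda>k. - c k / c i"]) simp
    with assms(4) show False ..
  qed
  moreover have "\<forall>x\<in>X. (\<Sum>k\<in>I. c k * v k x) = 0"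
    using split \<open>c i = 0\<close> by simp
  then have "\<forall>k\<in>I. c k = 0"
    using assms(3) unfolding lin_indep_def by blast
  ultimately show "\<forall>k\<in>insert i I. c k = 0" by simp
qed

interpretation fun_vector_space: vector_space "\<lambda>(c::real) (f::'x \<Rightarrow> real) x. c * f x"
  by unfold_locales (auto simp: fun_eq_iff algebra_simps)

lemma sum_fun_apply: "(\<Sum>i\<in>I. f i) x = (\<Sum>i\<in>I. f i x)"
  by (induction I rule: infinite_finite_induct) auto

text \<open>Extending by zero outside \<open>X\<close> embeds families into the function space, where the
  Steinitz bound \<open>independent_span_bound\<close> is available.\<close>

definition zero_outside :: "'x set \<Rightarrow> ('x \<Rightarrow> real) \<Rightarrow> 'x \<Rightarrow> real" where
  "zero_outside X f x = (if x \<in> X then f x else 0)"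

lemma combination_zero_outside_eq_0:
  assumes "(\<Sum>i\<in>I. (\<lambda>x. c i * zero_outside X (v i) x)) = 0" "x \<in> X"
  shows "(\<Sum>i\<in>I. c i * v i x) = 0"
  using assms by (auto simp: fun_eq_iff sum_fun_apply zero_outside_def dest!: spec[of _ x])

lemma lin_indep_inj_on_zero_outside:
  assumes "finite I" "lin_indep X I v"
  shows "inj_on (\<lambda>i. zero_outside X (v i)) I"
proof (rule inj_onI, rule ccontr)
  fix i j assume ij: "i \<in> I" "j \<in> I" "zero_outside X (v i) = zero_outside X (v j)" "i \<noteq> j"
  define c :: "_ \<Rightarrow> real" where "c t = of_bool (t = i) - of_bool (t = j)" for t
  have zero: "(\<Sum>t\<in>I. (\<lambda>x. c t * zero_outside X (v t) x)) = 0"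
    using ij assms(1)
    by (simp add: fun_eq_iff sum_fun_apply c_def left_diff_distrib sum_subtractf)
  have "c i = 0"
    by (rule lin_indepD[OF assms(2) combination_zero_outside_eq_0[OF zero] ij(1)])
  then show False
    using ij(4) by (simp add: c_def)
qed

lemma lin_indep_independent_zero_outside:
  assumes "finite I" "lin_indep X I v"
  shows "fun_vector_space.independent ((\<lambda>i. zero_outside X (v i)) ` I)"
proof
  let ?v = "\<lambda>i. zero_outside X (v i)"
  assume "fun_vector_space.dependent (?v ` I)"
  then obtain u where u: "\<exists>f\<in>?v ` I. u f \<noteq> 0" "(\<Sum>f\<in>?v ` I. (\<lambda>x. u f * f x)) = 0"
    using fun_vector_space.dependent_finite[of "?v ` I"] assms(1) by auto
  have zero: "(\<Sum>i\<in>I. (\<lambda>x. u (?v i) * ?v i x)) = 0"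
    using u(2) sum.reindex[OF lin_indep_inj_on_zero_outside[OF assms], of "\<lambda>f x. u f * f x"]
    by simp
  have "u (?v i) = 0" if "i \<in> I" for i
    by (rule lin_indepD[OF assms(2) combination_zero_outside_eq_0[OF zero] that])
  with u(1) show False by auto
qed

lemma in_lin_span_zero_outside:
  assumes "in_lin_span X K w f"
  shows "zero_outside X f \<in> fun_vector_space.span ((\<lambda>k. zero_outside X (w k)) ` K)"
proof -
  obtain \<beta> where "\<forall>x\<in>X. f x = (\<Sum>k\<in>K. \<beta> k * w k x)"
    using assms unfolding in_lin_span_def by blast
  then have "zero_outside X f = (\<Sum>k\<in>K. (\<lambda>x. \<beta> k * zero_outside X (w k) x))"
    by (auto simp: fun_eq_iff sum_fun_apply zero_outside_def)
  also have "\<dots> \<in> fun_vector_space.span ((\<lambda>k. zero_outside X (w k)) ` K)"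
    by (intro fun_vector_space.span_sum fun_vector_space.span_scale fun_vector_space.span_base) auto
  finally show ?thesis .
qed

lemma lin_indep_card_le:
  fixes v :: "'i \<Rightarrow> 'x \<Rightarrow> real" and w :: "'k \<Rightarrow> 'x \<Rightarrow> real"
  assumes "finite I" "finite K" and indep: "lin_indep X I v"
    and span: "\<And>i. i \<in> I \<Longrightarrow> in_lin_span X K w (v i)"
  shows "card I \<le> card K"
proof -
  let ?v = "\<lambda>i. zero_outside X (v i)" and ?w = "\<lambda>k. zero_outside X (w k)"
  have "?v ` I \<subseteq> fun_vector_space.span (?w ` K)"
    using span in_lin_span_zero_outside by blast
  then have "card (?v ` I) \<le> card (?w ` K)"
    using fun_vector_space.independent_span_bound lin_indep_independent_zero_outside[OF assms(1) indep]
      assms(2) by blast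
  also have "\<dots> \<le> card K"
    using assms(2) by (rule card_image_le)
  finally show ?thesis
    using card_image[OF lin_indep_inj_on_zero_outside[OF assms(1) indep]] by simp
qed

text \<open>A vector outside the span, added under a fresh index, would give \<open>card X + 1\<close> independent
  vectors in the span of the \<open>card X\<close> unit vectors.\<close>

lemma lin_indep_card_eq_spans:
  fixes v :: "nat \<Rightarrow> 'x \<Rightarrow> real"
  assumes "finite X" "finite I" "lin_indep X I v" "card I = card X"
  shows "in_lin_span X I v w"
proof (rule ccontr)
  assume w: "\<not> in_lin_span X I v w"
  obtain i0 where i0: "i0 \<notin> I"
    using ex_new_if_finite[OF infinite_UNIV_nat \<open>finite I\<close>] by blast
  define v' where "v' = v(i0 := w)"
  have same: "v i x = v' i x" if "i \<in> I" for i x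
    using i0 that by (auto simp: v'_def)
  have "lin_indep X I v'"
    using assms(3) lin_indep_cong[of I X v v'] same by blast
  moreover have "\<not> in_lin_span X I v' (v' i0)"
    using w in_lin_span_cong[of I X v v' w] same by (simp add: v'_def)
  ultimately have "lin_indep X (insert i0 I) v'"
    by (rule lin_indep_insert[OF i0 \<open>finite I\<close>])
  then have "card (insert i0 I) \<le> card X"
    using lin_indep_card_le[OF _ \<open>finite X\<close> _ in_lin_span_unit_vectors[OF \<open>finite X\<close>]] assms(2)
    by blast
  with i0 assms(2,4) show False by simp
qed

lemma maximal_lin_indep_spans:
  assumes "finite I" "I \<subseteq> D" "lin_indep X I v" "i \<in> D"
    and maximal: "\<And>J. J \<subseteq> D \<Longrightarrow> lin_indep X J v \<Longrightarrow> card J \<le> card I"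
  shows "in_lin_span X I v (v i)"
proof (cases "i \<in> I")
  case True
  with assms(1) show ?thesis by (rule in_lin_span_member)
next
  case False
  show ?thesis
  proof (rule ccontr)
    assume "\<not> ?thesis"
    with False assms(1,3) have "lin_indep X (insert i I) v" by (rule lin_indep_insert)
    with maximal assms(2,4) have "card (insert i I) \<le> card I" by simp
    with False assms(1) show False by simp
  qed
qed

lemma cols_indep_iff_lin_indep: "cols_indep A m S \<longleftrightarrow> lin_indep {..<m} S (\<lambda>j l. A l j)"
  by (simp add: cols_indep_def lin_indep_def Ball_def)

lemma rows_indep_iff_lin_indep: "rows_indep A r U \<longleftrightarrow> lin_indep {..<r} U A"
  by (simp add: rows_indep_def lin_indep_def Ball_def)

lemma card_le_mat_rank:
  assumes "S \<subseteq> {..<r}" "cols_indep A m S"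
  shows "card S \<le> mat_rank A m r"
  unfolding mat_rank_def
  by (rule Max_ge) (use assms in \<open>auto intro: finite_subset[of _ "card ` Pow {..<r}"]\<close>)

definition is_sub_inverse :: "rmat \<Rightarrow> nat set \<Rightarrow> nat set \<Rightarrow> rmat \<Rightarrow> bool" where
  "is_sub_inverse A U S C \<longleftrightarrow>
     (\<forall>u\<in>U. \<forall>u'\<in>U. (\<Sum>j\<in>S. A u j * C j u') = (if u = u' then 1 else 0)) \<and>
     (\<forall>j\<in>S. \<forall>j'\<in>S. (\<Sum>u\<in>U. C j u * A u j') = (if j = j' then 1 else 0)) \<and>
     (\<forall>j u. j \<notin> S \<or> u \<notin> U \<longrightarrow> C j u = 0)"

lemma sub_inverse_eq_The: "sub_inverse A U S = (THE C. is_sub_inverse A U S C)"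
  unfolding sub_inverse_def is_sub_inverse_def ..

lemma is_sub_inverse_unique:
  assumes "finite U" "finite S" "is_sub_inverse A U S C" "is_sub_inverse A U S C'"
  shows "C' = C"
proof (intro ext)
  fix j u
  show "C' j u = C j u"
  proof (cases "j \<in> S \<and> u \<in> U")
    case False
    then show ?thesis
      using assms(3,4) unfolding is_sub_inverse_def by auto
  next
    case True
    have right: "(\<Sum>k\<in>S. A u' k * C k u) = (if u' = u then 1 else 0)" if "u' \<in> U" for u'
      using assms(3) True that unfolding is_sub_inverse_def by blast
    have left: "(\<Sum>u'\<in>U. C' j u' * A u' k) = (if j = k then 1 else 0)" if "k \<in> S" for k
      using assms(4) True that unfolding is_sub_inverse_def by blast
    have "C' j u = (\<Sum>u'\<in>U. C' j u' * (\<Sum>k\<in>S. A u' k * C k u))"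
      using True assms(1) by (simp add: right of_bool_def[symmetric])
    also have "\<dots> = (\<Sum>k\<in>S. (\<Sum>u'\<in>U. C' j u' * A u' k) * C k u)"
      by (simp add: sum_distrib_left sum_distrib_right sum.swap[of _ U] mult.assoc)
    also have "\<dots> = C j u"
      using True assms(2) by (simp add: left of_bool_def[symmetric])
    finally show ?thesis .
  qed
qed

lemma sub_inverse_is_sub_inverse:
  assumes "finite U" "finite S" "is_sub_inverse A U S C"
  shows "is_sub_inverse A U S (sub_inverse A U S)"
  unfolding sub_inverse_eq_The
  by (rule theI[of _ C]) (use assms is_sub_inverse_unique in blast)+

lemma is_sub_inverse_exists:
  assumes "finite U" "finite S" and indep: "lin_indep U S (\<lambda>j u. A u j)"
    and spans: "\<And>w. in_lin_span U S (\<lambda>j u. A u j) w"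
  shows "\<exists>C. is_sub_inverse A U S C"
proof -
  have "\<exists>y. \<forall>u'\<in>U. of_bool (u' = u) = (\<Sum>k\<in>S. y k * A u' k)" for u
    using spans[of "\<lambda>u'. of_bool (u' = u)"] unfolding in_lin_span_def by simp
  then obtain Y where Y: "\<And>u u'. u' \<in> U \<Longrightarrow> of_bool (u' = u) = (\<Sum>k\<in>S. Y u k * A u' k)"
    by metis
  define C where "C j u = (if j \<in> S \<and> u \<in> U then Y u j else 0)" for j u
  have right: "(\<Sum>j\<in>S. A u j * C j u') = (if u = u' then 1 else 0)" if "u \<in> U" "u' \<in> U" for u u'
    using that Y[of u u'] by (simp add: C_def mult.commute of_bool_def cong: sum.cong)
  have left: "(\<Sum>u\<in>U. C j u * A u j') = (if j = j' then 1 else 0)" if "j \<in> S" "j' \<in> S" for j j'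
  proof -
    \<comment> \<open>\<open>A C = I\<close> on \<open>U\<close>, so \<open>A (C A - I)\<close> vanishes on \<open>U \<times> S\<close>; injectivity of \<open>A\<^sup>U\<^sub>S\<close> gives \<open>C A = I\<close>.\<close>
    define c where "c k = (\<Sum>u\<in>U. C k u * A u j') - of_bool (k = j')" for k
    have "(\<Sum>k\<in>S. c k * A u0 k) = 0" if "u0 \<in> U" for u0
    proof -
      have "(\<Sum>k\<in>S. (\<Sum>u\<in>U. C k u * A u j') * A u0 k) = (\<Sum>u\<in>U. (\<Sum>k\<in>S. A u0 k * C k u) * A u j')"
        by (simp add: sum_distrib_left sum_distrib_right sum.swap[of _ S] mult_ac)
      also have "\<dots> = A u0 j'"
        using that assms(1) by (simp add: right of_bool_def[symmetric])
      finally show ?thesis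
        using \<open>j' \<in> S\<close> assms(2)
        by (simp add: c_def left_diff_distrib sum_subtractf)
    qed
    then have "c j = 0"
      using lin_indepD[OF indep, of c j] \<open>j \<in> S\<close> by blast
    then show ?thesis
      by (simp add: c_def of_bool_def)
  qed
  have "\<forall>j u. j \<notin> S \<or> u \<notin> U \<longrightarrow> C j u = 0"
    by (simp add: C_def)
  with right left show ?thesis
    unfolding is_sub_inverse_def by blast
qed

lemma is_sub_inverse_reconstructs:
  assumes "is_sub_inverse A U S C" "finite S" "S \<subseteq> {..<r}" "U \<subseteq> X"
    and "in_lin_span X S (\<lambda>j l. A l j) v" "l \<in> X"
  shows "(\<Sum>j<r. A l j * (\<Sum>u\<in>U. C j u * v u)) = v l"
proof -
  obtain y where y: "\<And>x. x \<in> X \<Longrightarrow> v x = (\<Sum>k\<in>S. y k * A x k)"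
    using assms(5) unfolding in_lin_span_def by blast
  have left: "(\<Sum>u\<in>U. C j u * A u k) = (if j = k then 1 else 0)" if "j \<in> S" "k \<in> S" for j k
    using assms(1) that unfolding is_sub_inverse_def by blast
  have outside: "C j u = 0" if "j \<notin> S" for j u
    using assms(1) that unfolding is_sub_inverse_def by blast
  have coeff: "(\<Sum>u\<in>U. C j u * v u) = (if j \<in> S then y j else 0)" for j
  proof (cases "j \<in> S")
    case True
    have "(\<Sum>u\<in>U. C j u * v u) = (\<Sum>u\<in>U. C j u * (\<Sum>k\<in>S. y k * A u k))"
      using assms(4) y by (intro sum.cong) auto
    also have "\<dots> = (\<Sum>k\<in>S. (\<Sum>u\<in>U. C j u * A u k) * y k)"
      by (simp add: sum_distrib_left sum_distrib_right sum.swap[of _ U] mult_ac)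
    also have "\<dots> = y j"
      using True assms(2) by (simp add: left of_bool_def[symmetric])
    finally show ?thesis
      using True by simp
  qed (simp add: outside)
  have "(\<Sum>j<r. A l j * (\<Sum>u\<in>U. C j u * v u)) = (\<Sum>j<r. if j \<in> S then y j * A l j else 0)"
    by (intro sum.cong) (simp_all add: coeff)
  also have "\<dots> = (\<Sum>j\<in>S. y j * A l j)"
    using assms(3) by (simp add: sum.inter_restrict[symmetric] inf.absorb2)
  also have "\<dots> = v l"
    using y assms(6) by simp
  finally show ?thesis .
qed

context
  fixes A :: rmat and m r :: nat and S :: "nat set"
  assumes basis: "S \<subseteq> {..<r}" "card S = mat_rank A m r" "cols_indep A m S"
begin

lemma col_in_span_of_basis:
  assumes "j < r"
  shows "in_lin_span {..<m} S (\<lambda>j l. A l j) (\<lambda>l. A l j)"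
proof (rule maximal_lin_indep_spans[where D = "{..<r}"])
  show "finite S"
    using basis(1) by (rule finite_subset) simp
  show "lin_indep {..<m} S (\<lambda>j l. A l j)"
    using basis(3) by (simp add: cols_indep_iff_lin_indep)
  show "card J \<le> card S" if "J \<subseteq> {..<r}" "lin_indep {..<m} J (\<lambda>j l. A l j)" for J
    using card_le_mat_rank[of J r A m] that basis(2) by (simp add: cols_indep_iff_lin_indep)
qed (use basis(1) assms in auto)

lemma mat_mult_col_in_span_of_basis:
  "in_lin_span {..<m} S (\<lambda>j l. A l j) (\<lambda>l. mat_mult A r W l i)"
proof -
  have "in_lin_span {..<m} S (\<lambda>j l. A l j) (\<lambda>l. \<Sum>j<r. W j i * A l j)"
    by (rule in_lin_span_sum) (simp_all add: col_in_span_of_basis)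
  then show ?thesis
    by (simp add: mat_mult_def mult.commute)
qed

text \<open>Writing each column \<open>j\<close> as \<open>A\<^sub>S \<alpha>\<^sub>j\<close> exhibits every row of \<open>A\<close> as a combination
  of the \<open>card S\<close> vectors \<open>j \<mapsto> \<alpha>\<^sub>j k\<close>: row rank is at most column rank.\<close>

lemma card_rows_indep_le_mat_rank:
  assumes "T \<subseteq> {..<m}" "rows_indep A r T"
  shows "card T \<le> mat_rank A m r"
proof -
  obtain \<alpha> where \<alpha>: "\<And>j l. j < r \<Longrightarrow> l < m \<Longrightarrow> A l j = (\<Sum>k\<in>S. \<alpha> j k * A l k)"
    using col_in_span_of_basis unfolding in_lin_span_def by (metis lessThan_iff)
  have rows_in_span: "in_lin_span {..<r} S (\<lambda>k j. \<alpha> j k) (A l)" if "l \<in> T" for l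
    unfolding in_lin_span_def
    using that assms(1) by (intro exI[of _ "A l"]) (auto simp: \<alpha> mult.commute)
  have "card T \<le> card S"
    using lin_indep_card_le[of T S "{..<r}" A "\<lambda>k j. \<alpha> j k", OF _ _ _ rows_in_span] assms basis(1)
    by (simp add: rows_indep_iff_lin_indep finite_subset)
  then show ?thesis
    using basis(2) by simp
qed

context
  fixes U :: "nat set"
  assumes rows: "U \<subseteq> {..<m}" "card U = mat_rank A m r" "rows_indep A r U"
begin

lemma row_in_span_of_rows:
  assumes "l < m"
  shows "in_lin_span {..<r} U A (A l)"
proof (rule maximal_lin_indep_spans[where D = "{..<m}"])
  show "finite U"
    using rows(1) by (rule finite_subset) simp
  show "lin_indep {..<r} U A"
    using rows(3) by (simp add: rows_indep_iff_lin_indep)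
  show "card T \<le> card U" if "T \<subseteq> {..<m}" "lin_indep {..<r} T A" for T
    using card_rows_indep_le_mat_rank[of T] that rows(2) by (simp add: rows_indep_iff_lin_indep)
qed (use rows(1) assms in auto)

lemma basis_indep_on_rows: "lin_indep U S (\<lambda>j u. A u j)"
  unfolding lin_indep_def
proof (intro allI impI)
  fix c assume zero_on_rows: "\<forall>u\<in>U. (\<Sum>j\<in>S. c j * A u j) = 0"
  have "(\<Sum>j\<in>S. c j * A l j) = 0" if l: "l < m" for l
  proof -
    obtain \<mu> where \<mu>: "\<And>j. j < r \<Longrightarrow> A l j = (\<Sum>u\<in>U. \<mu> u * A u j)"
      using row_in_span_of_rows[OF l] unfolding in_lin_span_def by auto
    have "(\<Sum>j\<in>S. c j * A l j) = (\<Sum>j\<in>S. c j * (\<Sum>u\<in>U. \<mu> u * A u j))"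
      using basis(1) \<mu> by (intro sum.cong) auto
    also have "\<dots> = (\<Sum>u\<in>U. \<mu> u * (\<Sum>j\<in>S. c j * A u j))"
      by (simp add: sum_distrib_left sum.swap[of _ S] mult.left_commute)
    also have "\<dots> = 0"
      using zero_on_rows by simp
    finally show ?thesis .
  qed
  then show "\<forall>j\<in>S. c j = 0"
    using basis(3) unfolding cols_indep_def by blast
qed

lemma ensemble_B_is_sub_inverse: "is_sub_inverse A U S (ensemble_B A U S)"
proof -
  have fin: "finite U" "finite S"
    using rows(1) basis(1) by (auto intro: finite_subset)
  have "in_lin_span U S (\<lambda>j u. A u j) w" for w
    using lin_indep_card_eq_spans[OF fin(1,2) basis_indep_on_rows] basis(2) rows(2) by simp
  then obtain C where "is_sub_inverse A U S C"
    using is_sub_inverse_exists[OF fin basis_indep_on_rows] by blast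
  then show ?thesis
    unfolding ensemble_B_def by (rule sub_inverse_is_sub_inverse[OF fin])
qed

end

end

theorem mainTheorem7:
  fixes M A W :: rmat and m n r s :: nat and U :: "nat set"
  assumes "nonneg_mat M m n"
    and "nonneg_mat A m r"
    and "nonneg_mat W r n"
    and "\<forall>l<m. \<forall>i<n. M l i = mat_mult A r W l i"
    and "stable_fact M A W m n r"
    and "s = mat_rank A m r"
    and "U \<subseteq> {..<m}" and "card U = s" and "rows_indep A r U"
  shows "\<forall>S \<in> ensemble_sets A m r s. \<forall>i<n. \<forall>l<m.
           (\<Sum>j<r. A l j * (\<Sum>u\<in>U. ensemble_B A U S j u * M u i)) = M l i"
proof (intro ballI allI impI)
  fix S i l assume "S \<in> ensemble_sets A m r s" "i < n" "l < m"
  then have basis: "S \<subseteq> {..<r}" "card S = mat_rank A m r" "cols_indep A m S"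
    using assms(6) unfolding ensemble_sets_def by auto
  have "in_lin_span {..<m} S (\<lambda>j l. A l j) (\<lambda>l. M l i)"
    using mat_mult_col_in_span_of_basis[OF basis, of W i] assms(4) \<open>i < n\<close>
    unfolding in_lin_span_def by simp
  moreover have "is_sub_inverse A U S (ensemble_B A U S)"
    using ensemble_B_is_sub_inverse[OF basis] assms(6-9) by simp
  ultimately show "(\<Sum>j<r. A l j * (\<Sum>u\<in>U. ensemble_B A U S j u * M u i)) = M l i"
    using is_sub_inverse_reconstructs[of A U S _ r "{..<m}"] basis(1) assms(7) \<open>l < m\<close>
    by (auto intro: finite_subset)
qed

end
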